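(* For every $\beta>0$ there exist $\epsilon_0,\delta_0>0$ such that for any algorithm in $\mathcal{F}$ which finds an $\epsilon$-best arm with success probability at least $1-\delta$, where $\epsilon<\epsilon_0$ and $\delta<\delta_0$, there exists $n_0$ such that if $n>n_0$, the algorithm requires at least $\left(\frac12-\beta\right)\frac{n}{\epsilon^2}\log\frac{1}{\delta}$ queries (samples) on some instance with $n$ arms.
   Context: Setting: a set $A$ of $n$ arms; each arm $a$ has an unknown distribution supported on $[0,1]$ with mean $\mu(a)$; a query (sample) of an arm returns an independent draw from its distribution. An $\epsilon$-best arm is an arm $a$ with $\mu(a)\ge\max_{a'\in A}\mu(a')-\epsilon$; the algorithm must succeed with probability at least $1-\delta$ on every instance. $\log$ is natural. $\mathcal{F}$ is the family of elimination algorithms: such an algorithm maintains a set $S$, initially $S=A$, and repeatedly (i) pulls each arm in $S$ once, (ii) eliminates some of the arms from $S$ (irrevocably, based on the observations so far), and (iii) terminates if $|S|=1$, outputting the remaining arm, and otherwise returns to (i). *)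

theory Defs
  imports "HOL-Probability.Probability"
begin

text \<open>The observation table
omega a t is the t-th sample of arm a (all samples independent); since an
elimination algorithm pulls each surviving arm once per round, the run is a
deterministic function of this table.\<close>

type_synonym elim_rule = "nat \<Rightarrow> (nat \<Rightarrow> real list) \<Rightarrow> nat set"
  \<comment> \<open>given n and the observation history of each arm, the arms to eliminate\<close>

definition valid_instance :: "nat \<Rightarrow> (nat \<Rightarrow> real measure) \<Rightarrow> bool" where
  "valid_instance n nu \<longleftrightarrow>
     (\<forall>a<n. prob_space (nu a) \<and> sets (nu a) = sets borel \<and>
            (AE x in nu a. 0 \<le> x \<and> x \<le> 1))"

definition arm_mean :: "(nat \<Rightarrow> real measure) \<Rightarrow> nat \<Rightarrow> real" where
  "arm_mean nu a = (\<integral>x. x \<partial>(nu a))"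

definition eps_best :: "nat \<Rightarrow> (nat \<Rightarrow> real measure) \<Rightarrow> real \<Rightarrow> nat \<Rightarrow> bool" where
  "eps_best n nu \<epsilon> a \<longleftrightarrow> a < n \<and> (\<forall>a'<n. arm_mean nu a' - \<epsilon> \<le> arm_mean nu a)"

text \<open>State after k rounds: surviving set and number of pulls of each arm.
Round: (i) pull every surviving arm once, (ii) eliminate the arms chosen by
the rule (an elimination of all remaining arms is not allowed and is treated
as eliminating nothing), (iii) stop if exactly one arm remains.\<close>

primrec elim_state :: "elim_rule \<Rightarrow> nat \<Rightarrow> (nat \<Rightarrow> nat \<Rightarrow> real) \<Rightarrow> nat \<Rightarrow> nat set \<times> (nat \<Rightarrow> nat)" where
  "elim_state R n \<omega> 0 = ({..<n}, \<lambda>a. 0)"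
| "elim_state R n \<omega> (Suc k) =
     (let (S, c) = elim_state R n \<omega> k in
      if 0 < k \<and> card S = 1 then (S, c)
      else (let c' = (\<lambda>a. if a \<in> S then Suc (c a) else c a);
                h = (\<lambda>a. map (\<omega> a) [0..<c' a]);
                S' = S - R n h
            in (if S' = {} then S else S', c')))"

definition elim_success :: "elim_rule \<Rightarrow> nat \<Rightarrow> (nat \<Rightarrow> real measure) \<Rightarrow> real \<Rightarrow> (nat \<Rightarrow> nat \<Rightarrow> real) \<Rightarrow> bool" where
  "elim_success R n nu \<epsilon> \<omega> \<longleftrightarrow>
     (\<exists>k>0. \<exists>a. fst (elim_state R n \<omega> k) = {a} \<and> eps_best n nu \<epsilon> a)"

definition num_queries :: "elim_rule \<Rightarrow> nat \<Rightarrow> (nat \<Rightarrow> nat \<Rightarrow> real) \<Rightarrow> ennreal" where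
  "num_queries R n \<omega> = (SUP k. of_nat (\<Sum>a<n. snd (elim_state R n \<omega> k) a))"

definition sample_space :: "nat \<Rightarrow> (nat \<Rightarrow> real measure) \<Rightarrow> (nat \<Rightarrow> nat \<Rightarrow> real) measure" where
  "sample_space n nu = (\<Pi>\<^sub>M a\<in>{..<n}. \<Pi>\<^sub>M t\<in>(UNIV::nat set). nu a)"

definition success_prob :: "elim_rule \<Rightarrow> nat \<Rightarrow> (nat \<Rightarrow> real measure) \<Rightarrow> real \<Rightarrow> real" where
  "success_prob R n nu \<epsilon> =
     measure (sample_space n nu) {\<omega> \<in> space (sample_space n nu). elim_success R n nu \<epsilon> \<omega>}"

definition expected_queries :: "elim_rule \<Rightarrow> nat \<Rightarrow> (nat \<Rightarrow> real measure) \<Rightarrow> ennreal" where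
  "expected_queries R n nu = (\<integral>\<^sup>+ \<omega>. num_queries R n \<omega> \<partial>(sample_space n nu))"

end

theory Submission
  imports Defs
begin

text \<open>The bound is witnessed by the fair instance, in which every arm is a fair coin. For an arm
  \<open>a\<close> let \<open>\<nu>\<^sub>a\<close> be the instance in which \<open>a\<close> alone has mean \<open>1/2 + \<gamma>\<close>, where \<open>\<gamma> = (1 + b) \<epsilon> > \<epsilon>\<close>,
  so that \<open>a\<close> is the only \<open>\<epsilon>\<close>-best arm of \<open>\<nu>\<^sub>a\<close>. Up to round \<open>T\<close> a run depends only on the 0/1 table
  of the first \<open>T\<close> samples of the arms, and we take \<open>T \<approx> (1 - 2 b) ln (1/\<delta>) / KL\<close>, where
  \<open>KL \<approx> 2 \<gamma>\<^sup>2\<close> is the Kullback-Leibler divergence between a fair coin and one of bias \<open>1/2 + \<gamma>\<close>.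
  Under \<open>\<nu>\<^sub>a\<close> the algorithm eliminates \<open>a\<close> within \<open>T\<close> rounds with probability at most \<open>\<delta>\<close>; a Chernoff
  bound on the likelihood ratio of the tables transfers this to probability at most \<open>b/2\<close> on the
  fair instance. In every run each arm is eliminated within \<open>T\<close> rounds, or is the sole survivor, or
  has been pulled in each of the first \<open>T\<close> rounds, and at most one arm is the sole survivor. So on the
  fair instance the expected number of arms pulled \<open>T\<close> times is at least \<open>n (1 - b/2) - 1\<close>, and the
  bound follows with \<open>b \<le> \<beta>/4\<close>.\<close>

section \<open>Runs of an elimination algorithm\<close>

lemma elim_state_Suc:
  "elim_state R n \<omega> (Suc k) =
     (let S = fst (elim_state R n \<omega> k); c = snd (elim_state R n \<omega> k) in
      if 0 < k \<and> card S = 1 then (S, c)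
      else (let c' = (\<lambda>a. if a \<in> S then Suc (c a) else c a);
                S' = S - R n (\<lambda>a. map (\<omega> a) [0..<c' a])
            in (if S' = {} then S else S', c')))"
  by (simp add: case_prod_beta Let_def)

declare elim_state.simps(2)[simp del]

lemma elim_state_survivors_Suc_subset:
  "fst (elim_state R n \<omega> (Suc k)) \<subseteq> fst (elim_state R n \<omega> k)"
  by (auto simp: elim_state_Suc Let_def)

lemma elim_state_survivors_antimono:
  "k \<le> m \<Longrightarrow> fst (elim_state R n \<omega> m) \<subseteq> fst (elim_state R n \<omega> k)"
proof (induction m rule: dec_induct)
  case (step m)
  then show ?case using elim_state_survivors_Suc_subset[of R n \<omega> m] by blast
qed simp

lemma elim_state_survivors_subset: "fst (elim_state R n \<omega> k) \<subseteq> {..<n}"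
  using elim_state_survivors_antimono[of 0 k] by simp

lemma finite_elim_state_survivors: "finite (fst (elim_state R n \<omega> k))"
  by (rule finite_subset[OF elim_state_survivors_subset]) simp

lemma elim_state_pulls_Suc:
  "snd (elim_state R n \<omega> (Suc k)) a =
     (if a \<in> fst (elim_state R n \<omega> k) \<and> \<not> (0 < k \<and> card (fst (elim_state R n \<omega> k)) = 1)
      then Suc (snd (elim_state R n \<omega> k) a) else snd (elim_state R n \<omega> k) a)"
proof -
  obtain S c where "elim_state R n \<omega> k = (S, c)" by (cases "elim_state R n \<omega> k")
  then show ?thesis by (simp add: elim_state.simps(2) Let_def)
qed

lemma elim_state_pulls_le: "snd (elim_state R n \<omega> k) a \<le> k"
  by (induction k) (simp_all add: elim_state_pulls_Suc le_SucI)

lemma elim_state_pulls_outside: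
  assumes "n \<le> a"
  shows "snd (elim_state R n \<omega> k) a = 0"
proof (induction k)
  case (Suc k)
  have "a \<notin> fst (elim_state R n \<omega> k)" using elim_state_survivors_subset assms by fastforce
  with Suc show ?case by (simp add: elim_state_pulls_Suc)
qed simp

lemma elim_state_cong:
  assumes "\<And>a t. a < n \<Longrightarrow> t < k \<Longrightarrow> \<omega> a t = \<omega>' a t"
  shows "elim_state R n \<omega> k = elim_state R n \<omega>' k"
  using assms
proof (induction k)
  case (Suc k)
  then have IH: "elim_state R n \<omega> k = elim_state R n \<omega>' k" by simp
  let ?S = "fst (elim_state R n \<omega> k)" and ?c = "snd (elim_state R n \<omega> k)"
  let ?pulls = "\<lambda>a. if a \<in> ?S then Suc (?c a) else ?c a"
  have history: "(\<lambda>a. map (\<omega> a) [0..<?pulls a]) = (\<lambda>a. map (\<omega>' a) [0..<?pulls a])"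
  proof
    fix a
    show "map (\<omega> a) [0..<?pulls a] = map (\<omega>' a) [0..<?pulls a]"
    proof (cases "a < n")
      case True
      then show ?thesis
        using Suc.prems elim_state_pulls_le[of R n \<omega> k a] by (auto intro!: map_cong)
    next
      case False
      then show ?thesis
        using elim_state_survivors_subset[of R n \<omega> k] elim_state_pulls_outside[of n a R \<omega> k] by auto
    qed
  qed
  show ?case unfolding elim_state_Suc IH[symmetric] Let_def history ..
qed simp

lemma elim_state_stable:
  assumes "0 < k" "card (fst (elim_state R n \<omega> k)) = 1" "k \<le> m"
  shows "elim_state R n \<omega> m = elim_state R n \<omega> k"
  using assms(3)
proof (induction m rule: dec_induct)
  case (step m)
  with assms(1,2) have "0 < m \<and> card (fst (elim_state R n \<omega> m)) = 1" by simp
  then have "elim_state R n \<omega> (Suc m) = elim_state R n \<omega> m" by (simp add: elim_state_Suc)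
  with step show ?case by simp
qed simp

lemma elim_state_pulls_eq_rounds:
  "a \<in> fst (elim_state R n \<omega> k) \<Longrightarrow> 2 \<le> card (fst (elim_state R n \<omega> k)) \<Longrightarrow>
   snd (elim_state R n \<omega> k) a = k"
proof (induction k)
  case (Suc k)
  have sub: "fst (elim_state R n \<omega> (Suc k)) \<subseteq> fst (elim_state R n \<omega> k)"
    by (rule elim_state_survivors_Suc_subset)
  then have "2 \<le> card (fst (elim_state R n \<omega> k))"
    using card_mono[OF finite_elim_state_survivors sub] Suc.prems(2) by linarith
  with Suc sub show ?case by (auto simp: elim_state_pulls_Suc)
qed simp

lemma elim_state_survivor_cases:
  "a \<notin> fst (elim_state R n \<omega> k) \<or> fst (elim_state R n \<omega> k) = {a} \<or> snd (elim_state R n \<omega> k) a = k"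
proof (cases "a \<in> fst (elim_state R n \<omega> k) \<and> fst (elim_state R n \<omega> k) \<noteq> {a}")
  case True
  then obtain b where "b \<noteq> a" "{a, b} \<subseteq> fst (elim_state R n \<omega> k)" by auto
  then have "card {a, b} \<le> card (fst (elim_state R n \<omega> k))"
    by (intro card_mono finite_elim_state_survivors)
  with \<open>b \<noteq> a\<close> have "2 \<le> card (fst (elim_state R n \<omega> k))" by simp
  then show ?thesis using True elim_state_pulls_eq_rounds[of a R n \<omega> k] by blast
qed blast

lemma not_elim_success_if_eliminated:
  assumes "a \<notin> fst (elim_state R n \<omega> T)"
    and "\<And>b. eps_best n nu \<epsilon> b \<Longrightarrow> b = a"
  shows "\<not> elim_success R n nu \<epsilon> \<omega>"
proof
  assume "elim_success R n nu \<epsilon> \<omega>"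
  then obtain k where k: "0 < k" "fst (elim_state R n \<omega> k) = {a}"
    using assms(2) unfolding elim_success_def by auto
  have "fst (elim_state R n \<omega> k) \<subseteq> fst (elim_state R n \<omega> T)"
  proof (cases "k \<le> T")
    case True
    then show ?thesis using elim_state_stable[OF k(1) _ True] k(2) by simp
  qed (simp add: elim_state_survivors_antimono)
  then show False using assms(1) k(2) by simp
qed

lemma total_pulls_le_num_queries:
  "of_nat (\<Sum>a<n. snd (elim_state R n \<omega> k) a) \<le> num_queries R n \<omega>"
  unfolding num_queries_def by (rule SUP_upper) simp

section \<open>Bernoulli instances and tables of observations\<close>

definition bernoulli_arm :: "real \<Rightarrow> real measure" where
  "bernoulli_arm q = distr (measure_pmf (bernoulli_pmf q)) borel of_bool"

lemma sets_bernoulli_arm [simp]: "sets (bernoulli_arm q) = sets borel"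
  by (simp add: bernoulli_arm_def)

lemma prob_space_bernoulli_arm: "prob_space (bernoulli_arm q)"
  unfolding bernoulli_arm_def by (rule prob_space.prob_space_distr) (simp_all add: measure_pmf.prob_space_axioms)

lemma emeasure_bernoulli_arm_singleton:
  assumes "0 \<le> q" "q \<le> 1" "v \<in> {0, 1}"
  shows "emeasure (bernoulli_arm q) {v} = ennreal (if v = 1 then q else 1 - q)"
proof -
  have "of_bool -` {v} = (if v = 1 then {True} else {False :: bool})"
    using assms(3) by auto
  then show ?thesis
    using assms by (simp add: bernoulli_arm_def emeasure_distr emeasure_pmf_single)
qed

lemma integral_bernoulli_arm: "0 \<le> q \<Longrightarrow> q \<le> 1 \<Longrightarrow> (\<integral>x. x \<partial>bernoulli_arm q) = q"
  unfolding bernoulli_arm_def by (subst integral_distr) auto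

lemma valid_instance_bernoulli_arms:
  "(\<And>a. 0 \<le> p a \<and> p a \<le> 1) \<Longrightarrow> valid_instance n (\<lambda>a. bernoulli_arm (p a))"
  unfolding valid_instance_def bernoulli_arm_def
  by (auto simp: AE_distr_iff prob_space_bernoulli_arm[unfolded bernoulli_arm_def])

lemma arm_mean_bernoulli_arms:
  "(\<And>a. 0 \<le> p a \<and> p a \<le> 1) \<Longrightarrow> arm_mean (\<lambda>a. bernoulli_arm (p a)) a = p a"
  by (simp add: arm_mean_def integral_bernoulli_arm)

lemma prob_space_sample_space: "(\<And>a. prob_space (nu a)) \<Longrightarrow> prob_space (sample_space n nu)"
  unfolding sample_space_def by (intro prob_space_PiM) auto

definition grid :: "nat \<Rightarrow> nat \<Rightarrow> (nat \<times> nat) set" where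
  "grid n T = {..<n} \<times> {..<T}"

definition tables :: "nat \<Rightarrow> nat \<Rightarrow> (nat \<times> nat \<Rightarrow> real) set" where
  "tables n T = (\<Pi>\<^sub>E x\<in>grid n T. {0, 1})"

definition table_of :: "nat \<Rightarrow> nat \<Rightarrow> (nat \<Rightarrow> nat \<Rightarrow> real) \<Rightarrow> nat \<times> nat \<Rightarrow> real" where
  "table_of n T \<omega> = restrict (case_prod \<omega>) (grid n T)"

definition table_weight :: "nat \<Rightarrow> nat \<Rightarrow> (nat \<Rightarrow> real) \<Rightarrow> (nat \<times> nat \<Rightarrow> real) \<Rightarrow> real" where
  "table_weight n T p \<tau> = (\<Prod>x\<in>grid n T. if \<tau> x = 1 then p (fst x) else 1 - p (fst x))"

lemma finite_grid [simp]: "finite (grid n T)"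
  by (simp add: grid_def)

lemma finite_tables [simp]: "finite (tables n T)"
  by (simp add: tables_def finite_PiE)

lemma card_tables: "card (tables n T) = 2 ^ card (grid n T)"
  by (simp add: tables_def card_PiE numeral_2_eq_2)

lemma table_weight_nonneg: "(\<And>a. 0 \<le> p a \<and> p a \<le> 1) \<Longrightarrow> 0 \<le> table_weight n T p \<tau>"
  unfolding table_weight_def by (rule prod_nonneg) simp

lemma table_of_in_tables_iff:
  "\<tau> \<in> tables n T \<Longrightarrow> table_of n T \<omega> = \<tau> \<longleftrightarrow> (\<forall>x\<in>grid n T. \<omega> (fst x) (snd x) = \<tau> x)"
  unfolding table_of_def tables_def by (auto simp: restrict_def PiE_iff extensional_def fun_eq_iff)

lemma elim_state_table_of: "elim_state R n \<omega> T = elim_state R n (curry (table_of n T \<omega>)) T"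
  by (rule elim_state_cong) (simp add: table_of_def grid_def)

lemma sample_space_cylinder_eq_PiE:
  assumes "\<And>a. space (nu a) = UNIV"
  shows "{\<omega> \<in> space (sample_space n nu). \<forall>x\<in>grid n T. \<omega> (fst x) (snd x) = \<tau> x} =
    (\<Pi>\<^sub>E a\<in>{..<n}. prod_emb UNIV (\<lambda>_. nu a) {..<T} (\<Pi>\<^sub>E t\<in>{..<T}. {\<tau> (a, t)}))"
  by (auto simp: sample_space_def grid_def space_PiM prod_emb_def PiE_iff assms extensional_def)

lemma
  assumes "\<And>a. prob_space (nu a)" and "\<And>a. sets (nu a) = sets borel"
  shows sets_sample_space_cylinder:
      "{\<omega> \<in> space (sample_space n nu). \<forall>x\<in>grid n T. \<omega> (fst x) (snd x) = \<tau> x} \<in> sets (sample_space n nu)"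
    and emeasure_sample_space_cylinder:
      "emeasure (sample_space n nu) {\<omega> \<in> space (sample_space n nu). \<forall>x\<in>grid n T. \<omega> (fst x) (snd x) = \<tau> x}
        = (\<Prod>x\<in>grid n T. emeasure (nu (fst x)) {\<tau> x})"
proof -
  have space: "space (nu a) = UNIV" for a
    using assms(2) sets_eq_imp_space_eq by fastforce
  let ?row = "\<lambda>a. \<Pi>\<^sub>M t\<in>(UNIV::nat set). nu a"
  let ?C = "\<lambda>a. prod_emb UNIV (\<lambda>_. nu a) {..<T} (\<Pi>\<^sub>E t\<in>{..<T}. {\<tau> (a, t)})"
  have C_sets: "?C a \<in> sets (?row a)" for a
    by (rule sets_PiM_I) (auto simp: assms(2))
  show "{\<omega> \<in> space (sample_space n nu). \<forall>x\<in>grid n T. \<omega> (fst x) (snd x) = \<tau> x} \<in> sets (sample_space n nu)"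
    unfolding sample_space_cylinder_eq_PiE[OF space] unfolding sample_space_def
    by (rule sets_PiM_I_finite) (simp_all add: C_sets)
  have "emeasure (sample_space n nu) (\<Pi>\<^sub>E a\<in>{..<n}. ?C a)
      = emeasure (sample_space n nu) (prod_emb {..<n} ?row {..<n} (\<Pi>\<^sub>E a\<in>{..<n}. ?C a))"
    using C_sets sets.sets_into_space by (subst prod_emb_PiE_same_index) (auto simp: sample_space_def)
  also have "\<dots> = (\<Prod>a<n. emeasure (?row a) (?C a))"
    unfolding sample_space_def
    by (rule emeasure_PiM_emb) (simp_all add: C_sets assms(1) prob_space_PiM)
  also have "\<dots> = (\<Prod>a<n. \<Prod>t<T. emeasure (nu a) {\<tau> (a, t)})"
    by (intro prod.cong refl emeasure_PiM_emb) (simp_all add: assms)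
  also have "\<dots> = (\<Prod>x\<in>grid n T. emeasure (nu (fst x)) {\<tau> x})"
    by (simp add: grid_def prod.cartesian_product case_prod_beta)
  finally show "emeasure (sample_space n nu) {\<omega> \<in> space (sample_space n nu). \<forall>x\<in>grid n T. \<omega> (fst x) (snd x) = \<tau> x}
        = (\<Prod>x\<in>grid n T. emeasure (nu (fst x)) {\<tau> x})"
    unfolding sample_space_cylinder_eq_PiE[OF space] .
qed

lemma
  assumes p: "\<And>a. 0 \<le> p a \<and> p a \<le> 1" and "\<tau> \<in> tables n T"
  defines "M \<equiv> sample_space n (\<lambda>a. bernoulli_arm (p a))"
  shows sets_table_singleton_event: "{\<omega> \<in> space M. table_of n T \<omega> = \<tau>} \<in> sets M"
    and emeasure_table_singleton_event:
      "emeasure M {\<omega> \<in> space M. table_of n T \<omega> = \<tau>} = ennreal (table_weight n T p \<tau>)"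
proof -
  have arms: "\<And>a. prob_space (bernoulli_arm (p a))" "\<And>a. sets (bernoulli_arm (p a)) = sets borel"
    by (simp_all add: prob_space_bernoulli_arm)
  have event: "{\<omega> \<in> space M. table_of n T \<omega> = \<tau>} = {\<omega> \<in> space M. \<forall>x\<in>grid n T. \<omega> (fst x) (snd x) = \<tau> x}"
    using table_of_in_tables_iff[OF \<open>\<tau> \<in> tables n T\<close>] by blast
  show "{\<omega> \<in> space M. table_of n T \<omega> = \<tau>} \<in> sets M"
    unfolding event unfolding M_def by (rule sets_sample_space_cylinder[OF arms])
  have "\<tau> x \<in> {0, 1}" if "x \<in> grid n T" for x
    using \<open>\<tau> \<in> tables n T\<close> that unfolding tables_def by blast
  then have "emeasure M {\<omega> \<in> space M. table_of n T \<omega> = \<tau>}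
      = (\<Prod>x\<in>grid n T. ennreal (if \<tau> x = 1 then p (fst x) else 1 - p (fst x)))"
    unfolding event unfolding M_def emeasure_sample_space_cylinder[OF arms]
    by (intro prod.cong refl emeasure_bernoulli_arm_singleton) (simp_all add: p)
  also have "\<dots> = ennreal (table_weight n T p \<tau>)"
    unfolding table_weight_def by (rule prod_ennreal) (simp add: p)
  finally show "emeasure M {\<omega> \<in> space M. table_of n T \<omega> = \<tau>} = ennreal (table_weight n T p \<tau>)" .
qed

lemma
  assumes p: "\<And>a. 0 \<le> p a \<and> p a \<le> 1" and X: "X \<subseteq> tables n T"
  defines "M \<equiv> sample_space n (\<lambda>a. bernoulli_arm (p a))"
  shows sets_table_event: "{\<omega> \<in> space M. table_of n T \<omega> \<in> X} \<in> sets M"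
    and emeasure_table_event:
      "emeasure M {\<omega> \<in> space M. table_of n T \<omega> \<in> X} = ennreal (\<Sum>\<tau>\<in>X. table_weight n T p \<tau>)"
    and measure_table_event:
      "measure M {\<omega> \<in> space M. table_of n T \<omega> \<in> X} = (\<Sum>\<tau>\<in>X. table_weight n T p \<tau>)"
proof -
  let ?event = "\<lambda>\<tau>. {\<omega> \<in> space M. table_of n T \<omega> = \<tau>}"
  have fin: "finite X"
    using X by (rule finite_subset) simp
  have event_sets: "?event ` X \<subseteq> sets M"
    using X sets_table_singleton_event[where p = p, OF p] unfolding M_def by blast
  have union: "{\<omega> \<in> space M. table_of n T \<omega> \<in> X} = (\<Union>\<tau>\<in>X. ?event \<tau>)"
    by blast
  show "{\<omega> \<in> space M. table_of n T \<omega> \<in> X} \<in> sets M"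
    unfolding union using fin event_sets by (intro sets.finite_UN) blast+
  have disj: "disjoint_family_on ?event X"
    unfolding disjoint_family_on_def by blast
  have "emeasure M (\<Union>\<tau>\<in>X. ?event \<tau>) = (\<Sum>\<tau>\<in>X. emeasure M (?event \<tau>))"
    using event_sets disj fin by (rule sum_emeasure[symmetric])
  also have "\<dots> = (\<Sum>\<tau>\<in>X. ennreal (table_weight n T p \<tau>))"
    using X by (intro sum.cong refl) (simp add: M_def emeasure_table_singleton_event[where p = p, OF p] subsetD)
  also have "\<dots> = ennreal (\<Sum>\<tau>\<in>X. table_weight n T p \<tau>)"
    by (rule sum_ennreal) (simp add: table_weight_nonneg p)
  finally show emeasure: "emeasure M {\<omega> \<in> space M. table_of n T \<omega> \<in> X} = ennreal (\<Sum>\<tau>\<in>X. table_weight n T p \<tau>)"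
    unfolding union .
  then show "measure M {\<omega> \<in> space M. table_of n T \<omega> \<in> X} = (\<Sum>\<tau>\<in>X. table_weight n T p \<tau>)"
    by (simp add: measure_def table_weight_nonneg p sum_nonneg)
qed

section \<open>Likelihood ratios and change of measure\<close>

lemma one_le_mult_plus_powr:
  fixes c r lam :: real
  assumes "0 < c" "0 < r" "0 < lam"
  shows "1 \<le> c * r + (c * r) powr (- lam)"
proof (cases "1 \<le> c * r")
  case False
  then have "(c * r) powr lam \<le> 1"
    using assms by (simp add: less_eq_real_def powr01_less_one)
  then have "1 \<le> (c * r) powr (- lam)"
    using assms by (simp add: powr_minus field_simps)
  then show ?thesis using assms by (simp add: add_increasing)
qed (use assms in \<open>simp add: add_increasing2\<close>)

text \<open>A Chernoff-type change of measure: a set of small weight \<open>w \<cdot> r\<close> has small weight \<open>w\<close>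
  unless the negative moments of the ratio \<open>r\<close> are large.\<close>

lemma sum_le_change_of_measure:
  fixes w r :: "'a \<Rightarrow> real"
  assumes "finite A" "X \<subseteq> A" "0 < c" "0 < lam"
    and w: "\<And>x. x \<in> A \<Longrightarrow> 0 \<le> w x" and r: "\<And>x. x \<in> A \<Longrightarrow> 0 < r x"
  shows "(\<Sum>x\<in>X. w x) \<le> c * (\<Sum>x\<in>X. w x * r x) + c powr (- lam) * (\<Sum>x\<in>A. w x * r x powr (- lam))"
proof -
  have "w x \<le> c * (w x * r x) + c powr (- lam) * (w x * r x powr (- lam))" if "x \<in> A" for x
  proof -
    have "w x * 1 \<le> w x * (c * r x + (c * r x) powr (- lam))"
      using one_le_mult_plus_powr[OF \<open>0 < c\<close> r[OF that] \<open>0 < lam\<close>] w[OF that]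
      by (rule mult_left_mono)
    then show ?thesis
      using \<open>0 < c\<close> r[OF that] by (simp add: powr_mult algebra_simps)
  qed
  then have "(\<Sum>x\<in>X. w x) \<le> (\<Sum>x\<in>X. c * (w x * r x) + c powr (- lam) * (w x * r x powr (- lam)))"
    using assms(2) by (intro sum_mono) blast
  also have "\<dots> = c * (\<Sum>x\<in>X. w x * r x) + c powr (- lam) * (\<Sum>x\<in>X. w x * r x powr (- lam))"
    by (simp add: sum.distrib sum_distrib_left)
  also have "(\<Sum>x\<in>X. w x * r x powr (- lam)) \<le> (\<Sum>x\<in>A. w x * r x powr (- lam))"
    using assms(1,2) w by (intro sum_mono2) auto
  finally show ?thesis by (simp add: mult_left_mono)
qed

text \<open>Hoeffding's lemma for a fair coin with values \<open>x\<close> and \<open>y\<close>.\<close>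

lemma fair_coin_exp_le:
  fixes x y :: real
  assumes "x \<le> y"
  shows "(exp x + exp y) / 2 \<le> exp ((x + y) / 2 + (y - x)\<^sup>2 / 8)"
proof -
  define h where "h = y - x"
  have "- h * (1/2) + ln (1 + (1/2) * (exp h - 1)) \<le> h\<^sup>2 / 8"
    by (rule Hoeffdings_lemma_aux) (use assms in \<open>simp_all add: h_def\<close>)
  then have "ln ((1 + exp h) / 2) \<le> h / 2 + h\<^sup>2 / 8"
    by (simp add: field_simps)
  then have "(1 + exp h) / 2 \<le> exp (h / 2 + h\<^sup>2 / 8)"
    by (metis add_pos_pos divide_pos_pos exp_gt_zero exp_ln exp_le_cancel_iff zero_less_numeral zero_less_one)
  then have "exp x * ((1 + exp h) / 2) \<le> exp x * exp (h / 2 + h\<^sup>2 / 8)"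
    by simp
  then show ?thesis
    by (simp add: h_def field_simps flip: exp_add)
qed

definition raised_means :: "nat \<Rightarrow> real \<Rightarrow> nat \<Rightarrow> real" where
  "raised_means a \<gamma> b = (if b = a then 1/2 + \<gamma> else 1/2)"

definition likelihood_ratio :: "nat \<Rightarrow> nat \<Rightarrow> nat \<Rightarrow> real \<Rightarrow> (nat \<times> nat \<Rightarrow> real) \<Rightarrow> real" where
  "likelihood_ratio n T a \<gamma> \<tau> =
     (\<Prod>x\<in>grid n T. if fst x = a then (if \<tau> x = 1 then 1 + 2 * \<gamma> else 1 - 2 * \<gamma>) else 1)"

text \<open>The Kullback-Leibler divergence of Bernoulli(1/2) from Bernoulli(1/2 + \<open>\<gamma>\<close>), and the range
  of the log-likelihood ratio of one sample.\<close>

definition kl_half :: "real \<Rightarrow> real" where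
  "kl_half \<gamma> = - (ln (1 + 2 * \<gamma>) + ln (1 - 2 * \<gamma>)) / 2"

definition log_ratio_range :: "real \<Rightarrow> real" where
  "log_ratio_range \<gamma> = ln (1 + 2 * \<gamma>) - ln (1 - 2 * \<gamma>)"

lemma raised_means_range: "0 < \<gamma> \<Longrightarrow> \<gamma> < 1/2 \<Longrightarrow> 0 \<le> raised_means a \<gamma> b \<and> raised_means a \<gamma> b \<le> 1"
  by (simp add: raised_means_def)

lemma table_weight_half: "table_weight n T (\<lambda>_. 1/2) \<tau> = (1/2) ^ card (grid n T)"
  unfolding table_weight_def by (rule trans[OF prod.cong[OF refl] prod_constant]) simp

lemma table_weight_raised_means:
  "table_weight n T (raised_means a \<gamma>) \<tau> = table_weight n T (\<lambda>_. 1/2) \<tau> * likelihood_ratio n T a \<gamma> \<tau>"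
  unfolding table_weight_half table_weight_def likelihood_ratio_def prod_constant[symmetric]
    prod.distrib[symmetric]
  by (rule prod.cong) (auto simp: raised_means_def)

lemma likelihood_ratio_pos: "0 < \<gamma> \<Longrightarrow> \<gamma> < 1/2 \<Longrightarrow> 0 < likelihood_ratio n T a \<gamma> \<tau>"
  unfolding likelihood_ratio_def by (rule prod_pos) auto

lemma sum_likelihood_ratio_powr:
  assumes "a < n" "0 < \<gamma>" "\<gamma> < 1/2"
  shows "(\<Sum>\<tau>\<in>tables n T. table_weight n T (\<lambda>_. 1/2) \<tau> * likelihood_ratio n T a \<gamma> \<tau> powr (- lam))
    = (((1 + 2 * \<gamma>) powr (- lam) + (1 - 2 * \<gamma>) powr (- lam)) / 2) ^ T"
proof -
  let ?f = "\<lambda>x (v::real). (1/2) * (if fst x = a then (if v = 1 then 1 + 2 * \<gamma> else 1 - 2 * \<gamma>) powr (- lam) else 1)"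
  have "(\<Sum>\<tau>\<in>tables n T. table_weight n T (\<lambda>_. 1/2) \<tau> * likelihood_ratio n T a \<gamma> \<tau> powr (- lam))
      = (\<Sum>\<tau>\<in>tables n T. \<Prod>x\<in>grid n T. ?f x (\<tau> x))"
    unfolding table_weight_half likelihood_ratio_def prod_powr_distrib prod_constant[symmetric]
      prod.distrib[symmetric]
    by (intro sum.cong prod.cong refl) simp
  also have "\<dots> = (\<Prod>x\<in>grid n T. \<Sum>v\<in>{0, 1}. ?f x v)"
    unfolding tables_def
    by (rule prod_sum_PiE[where A = "grid n T" and B = "\<lambda>_. {0, 1}" and f = ?f, symmetric]) simp_all
  also have "\<dots> = (\<Prod>x\<in>grid n T. if fst x = a then ((1 + 2 * \<gamma>) powr (- lam) + (1 - 2 * \<gamma>) powr (- lam)) / 2 else 1)"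
    by (rule prod.cong) (auto simp: field_simps)
  also have "\<dots> = (((1 + 2 * \<gamma>) powr (- lam) + (1 - 2 * \<gamma>) powr (- lam)) / 2) ^ card (grid n T \<inter> {x. fst x = a})"
    by (simp add: prod.If_cases)
  also have "grid n T \<inter> {x. fst x = a} = {a} \<times> {..<T}"
    using assms(1) by (auto simp: grid_def)
  finally show ?thesis by (simp add: card_cartesian_product)
qed

lemma fair_coin_powr_le:
  assumes "0 < \<gamma>" "\<gamma> < 1/2" "0 \<le> lam"
  shows "((1 + 2 * \<gamma>) powr (- lam) + (1 - 2 * \<gamma>) powr (- lam)) / 2
    \<le> exp (lam * kl_half \<gamma> + (lam * log_ratio_range \<gamma>)\<^sup>2 / 8)"
proof -
  have "- lam * ln (1 + 2 * \<gamma>) \<le> - lam * ln (1 - 2 * \<gamma>)"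
    using assms by (intro mult_left_mono_neg) auto
  from fair_coin_exp_le[OF this] show ?thesis
    using assms by (simp add: powr_def kl_half_def log_ratio_range_def algebra_simps power2_eq_square)
qed

lemma sum_likelihood_ratio_powr_le:
  assumes "a < n" "0 < \<gamma>" "\<gamma> < 1/2" "0 \<le> lam"
  shows "(\<Sum>\<tau>\<in>tables n T. table_weight n T (\<lambda>_. 1/2) \<tau> * likelihood_ratio n T a \<gamma> \<tau> powr (- lam))
    \<le> exp (real T * (lam * kl_half \<gamma> + (lam * log_ratio_range \<gamma>)\<^sup>2 / 8))"
proof -
  have "(((1 + 2 * \<gamma>) powr (- lam) + (1 - 2 * \<gamma>) powr (- lam)) / 2) ^ T
      \<le> exp (lam * kl_half \<gamma> + (lam * log_ratio_range \<gamma>)\<^sup>2 / 8) ^ T"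
    using fair_coin_powr_le[OF assms(2-4)] by (intro power_mono) simp_all
  then show ?thesis
    by (simp add: sum_likelihood_ratio_powr[OF assms(1-3)] exp_of_nat_mult[symmetric])
qed

lemma
  fixes \<gamma> :: real
  assumes "0 < \<gamma>" "\<gamma> \<le> 1/4"
  shows log_ratio_range_pos: "0 < log_ratio_range \<gamma>"
    and log_ratio_range_le: "log_ratio_range \<gamma> \<le> 6 * \<gamma>"
    and kl_half_ge: "2 * \<gamma>\<^sup>2 \<le> kl_half \<gamma>"
    and kl_half_le: "kl_half \<gamma> \<le> 2 * \<gamma>\<^sup>2 / (1 - 4 * \<gamma>\<^sup>2)"
proof -
  show "0 < log_ratio_range \<gamma>"
    using assms by (simp add: log_ratio_range_def)
  have "ln (1 + 2 * \<gamma>) \<le> 2 * \<gamma>"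
    using ln_le_minus_one[of "1 + 2 * \<gamma>"] assms by simp
  moreover have "- ln (1 - 2 * \<gamma>) \<le> 4 * \<gamma>"
  proof -
    have "- ln (1 - 2 * \<gamma>) = ln (1 / (1 - 2 * \<gamma>))"
      using assms by (simp add: ln_div)
    also have "\<dots> \<le> 1 / (1 - 2 * \<gamma>) - 1"
      using assms by (intro ln_le_minus_one) simp
    also have "\<dots> \<le> 4 * \<gamma>"
      using assms by (simp add: field_simps)
    finally show ?thesis .
  qed
  ultimately show "log_ratio_range \<gamma> \<le> 6 * \<gamma>"
    by (simp add: log_ratio_range_def)
  have "\<gamma>\<^sup>2 \<le> (1/4)\<^sup>2"
    using assms by (intro power_mono) simp_all
  then have small: "4 * \<gamma>\<^sup>2 < 1"
    by (simp add: power2_eq_square)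
  have kl: "kl_half \<gamma> = - ln (1 - 4 * \<gamma>\<^sup>2) / 2"
    using assms by (simp add: kl_half_def ln_mult_pos[symmetric] algebra_simps power2_eq_square)
  have "ln (1 - 4 * \<gamma>\<^sup>2) \<le> - 4 * \<gamma>\<^sup>2"
    using ln_le_minus_one[of "1 - 4 * \<gamma>\<^sup>2"] small by simp
  then show "2 * \<gamma>\<^sup>2 \<le> kl_half \<gamma>"
    unfolding kl by simp
  have "- ln (1 - 4 * \<gamma>\<^sup>2) = ln (1 / (1 - 4 * \<gamma>\<^sup>2))"
    using small by (simp add: ln_div)
  also have "\<dots> \<le> 1 / (1 - 4 * \<gamma>\<^sup>2) - 1"
    using small by (intro ln_le_minus_one) simp
  also have "\<dots> = 4 * \<gamma>\<^sup>2 / (1 - 4 * \<gamma>\<^sup>2)"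
    using small by (simp add: field_simps)
  finally show "kl_half \<gamma> \<le> 2 * \<gamma>\<^sup>2 / (1 - 4 * \<gamma>\<^sup>2)"
    unfolding kl by simp
qed

section \<open>Choice of the parameters\<close>

definition horizon :: "real \<Rightarrow> real \<Rightarrow> real \<Rightarrow> nat" where
  "horizon b L \<gamma> = nat \<lfloor>(1 - 2 * b) * L / kl_half \<gamma>\<rfloor>"

lemma
  fixes b L \<gamma> :: real
  assumes "0 \<le> b" "b < 1/2" "0 < \<gamma>" "\<gamma> \<le> 1/4" "0 < L"
  shows horizon_kl_half_le: "real (horizon b L \<gamma>) * kl_half \<gamma> \<le> (1 - 2 * b) * L"
    and horizon_log_ratio_range_le: "real (horizon b L \<gamma>) * (log_ratio_range \<gamma>)\<^sup>2 \<le> 18 * L"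
proof -
  let ?T = "real (horizon b L \<gamma>)" and ?K = "kl_half \<gamma>"
  have K: "2 * \<gamma>\<^sup>2 \<le> ?K"
    using kl_half_ge[OF assms(3,4)] .
  moreover have "0 < 2 * \<gamma>\<^sup>2"
    using assms(3) by simp
  ultimately have K_pos: "0 < ?K"
    by linarith
  have "0 \<le> (1 - 2 * b) * L / ?K"
    using assms K_pos by simp
  then have "?T \<le> (1 - 2 * b) * L / ?K"
    unfolding horizon_def by (rule of_nat_floor)
  then show T_K: "?T * ?K \<le> (1 - 2 * b) * L"
    using K_pos by (simp add: field_simps)
  have "?T * (2 * \<gamma>\<^sup>2) \<le> ?T * ?K"
    using K by (intro mult_left_mono) simp_all
  also have "\<dots> \<le> L"
  proof -
    have "0 \<le> b * L" using assms by simp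
    with T_K show ?thesis by (simp add: algebra_simps)
  qed
  finally have T_gamma: "?T * (2 * \<gamma>\<^sup>2) \<le> L" .
  have "(log_ratio_range \<gamma>)\<^sup>2 \<le> (6 * \<gamma>)\<^sup>2"
    using log_ratio_range_pos[OF assms(3,4)] log_ratio_range_le[OF assms(3,4)]
    by (intro power_mono) simp_all
  then have "?T * (log_ratio_range \<gamma>)\<^sup>2 \<le> ?T * (6 * \<gamma>)\<^sup>2"
    by (intro mult_left_mono) simp_all
  also have "\<dots> = 18 * (?T * (2 * \<gamma>\<^sup>2))"
    by (simp add: power_mult_distrib)
  finally show "?T * (log_ratio_range \<gamma>)\<^sup>2 \<le> 18 * L"
    using T_gamma by linarith
qed

lemma raised_bias_bounds:
  fixes b \<epsilon> :: real
  assumes "0 < b" "b < 1/8" "0 < \<epsilon>" "\<epsilon> < b / 4"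
  shows "\<epsilon> < \<epsilon> * (1 + b)" "\<epsilon> * (1 + b) \<le> 1/4"
proof -
  have "\<epsilon> * (1 + b) = \<epsilon> + \<epsilon> * b" "0 < \<epsilon> * b" "\<epsilon> * b \<le> \<epsilon>"
    using assms by (simp_all add: algebra_simps mult_left_le)
  then show "\<epsilon> < \<epsilon> * (1 + b)" "\<epsilon> * (1 + b) \<le> 1/4"
    using assms by linarith+
qed

lemma horizon_ratio_ge:
  fixes b \<epsilon> L :: real
  assumes b: "0 < b" "b < 1/8" and \<epsilon>: "0 < \<epsilon>" "\<epsilon> < b / 4" and L: "0 < L"
  shows "(1 - 5 * b) * (L / (2 * \<epsilon>\<^sup>2)) \<le> (1 - 2 * b) * L / kl_half (\<epsilon> * (1 + b))"
proof -
  define \<gamma> where "\<gamma> = \<epsilon> * (1 + b)"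
  have \<gamma>: "0 < \<gamma>" "\<gamma> \<le> 2 * \<epsilon>"
    using b \<epsilon> by (simp_all add: \<gamma>_def)
  have "\<gamma>\<^sup>2 \<le> (b / 2)\<^sup>2"
    using \<gamma> \<epsilon> by (intro power_mono) simp_all
  moreover have "(b / 2)\<^sup>2 \<le> b / 4"
    using b by (simp add: power2_eq_square field_simps)
  ultimately have \<gamma>_small: "4 * \<gamma>\<^sup>2 \<le> b"
    by simp
  have K: "0 < kl_half \<gamma>" "kl_half \<gamma> \<le> 2 * \<gamma>\<^sup>2 / (1 - b)"
  proof -
    have "\<gamma> \<le> 1/4" using \<gamma> \<epsilon> b by simp
    note kl = kl_half_ge[OF \<gamma>(1) this] kl_half_le[OF \<gamma>(1) this]
    moreover have "0 < 2 * \<gamma>\<^sup>2" using \<gamma>(1) by simp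
    ultimately show "0 < kl_half \<gamma>" by linarith
    show "kl_half \<gamma> \<le> 2 * \<gamma>\<^sup>2 / (1 - b)"
      using kl(2) divide_left_mono[of "1 - b" "1 - 4 * \<gamma>\<^sup>2" "2 * \<gamma>\<^sup>2"] \<gamma>_small b by simp
  qed
  have "0 < 1 + b" using b by simp
  then have "(1 - 5 * b) * (L / (2 * \<epsilon>\<^sup>2)) = (1 - 5 * b) * (1 + b)\<^sup>2 * L / (2 * \<gamma>\<^sup>2)"
    using \<epsilon> by (simp add: \<gamma>_def power_mult_distrib)
  also have "\<dots> \<le> (1 - 2 * b) * (1 - b) * L / (2 * \<gamma>\<^sup>2)"
  proof -
    have "(1 - 5 * b) * (1 + b)\<^sup>2 \<le> (1 - 2 * b) * (1 - b)"
      using b by (simp add: algebra_simps power2_eq_square power3_eq_cube)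
    then show ?thesis
      using L \<gamma> by (intro divide_right_mono mult_right_mono) simp_all
  qed
  also have "\<dots> = (1 - 2 * b) * L / (2 * \<gamma>\<^sup>2 / (1 - b))"
    using b by (simp add: field_simps)
  also have "\<dots> \<le> (1 - 2 * b) * L / kl_half \<gamma>"
    using K b L \<gamma>(1) by (intro divide_left_mono) simp_all
  finally show ?thesis
    by (simp add: \<gamma>_def)
qed

lemma horizon_ge:
  fixes b \<epsilon> L :: real
  assumes b: "0 < b" "b < 1/8" and \<epsilon>: "0 < \<epsilon>" "\<epsilon> < b / 4" and L: "2 / b \<le> L"
  shows "(1 - 6 * b) * L / (2 * \<epsilon>\<^sup>2) \<le> real (horizon b L (\<epsilon> * (1 + b)))"
proof -
  define A where "A = L / (2 * \<epsilon>\<^sup>2)"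
  have "16 \<le> 2 / b" using b by (simp add: field_simps)
  with L have L_ge: "16 \<le> L" by linarith
  have "2 * \<epsilon>\<^sup>2 \<le> 2 * (b / 4)\<^sup>2"
    using \<epsilon> by (intro mult_left_mono power_mono) simp_all
  also have "\<dots> = b * (b / 8)"
    by (simp add: power2_eq_square)
  also have "\<dots> \<le> b * L"
    using b L_ge by (intro mult_left_mono) simp_all
  finally have "1 \<le> b * A"
    using \<epsilon> by (simp add: A_def field_simps)
  moreover have "(1 - 5 * b) * A \<le> (1 - 2 * b) * L / kl_half (\<epsilon> * (1 + b))"
    unfolding A_def using L_ge by (intro horizon_ratio_ge[OF b \<epsilon>]) simp
  ultimately have "(1 - 6 * b) * A \<le> (1 - 2 * b) * L / kl_half (\<epsilon> * (1 + b)) - 1"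
    by (simp add: algebra_simps)
  also have "\<dots> \<le> real (horizon b L (\<epsilon> * (1 + b)))"
    unfolding horizon_def by linarith
  finally show ?thesis
    by (simp add: A_def)
qed

lemma horizon_pos:
  fixes b \<epsilon> L :: real
  assumes b: "0 < b" "b < 1/8" and \<epsilon>: "0 < \<epsilon>" "\<epsilon> < b / 4" and L: "2 / b \<le> L"
  shows "0 < horizon b L (\<epsilon> * (1 + b))"
proof -
  have "0 < 2 / b" using b by simp
  with L have "0 < L" by linarith
  with b \<epsilon> have "0 < (1 - 6 * b) * L / (2 * \<epsilon>\<^sup>2)"
    by simp
  with horizon_ge[OF b \<epsilon> L] show ?thesis
    by linarith
qed

text \<open>After \<open>T K \<le> (1 - 2 b) L\<close> the exponent is at most \<open>- lam b L + T (lam u)\<^sup>2 / 8\<close>, and \<open>lam\<close> is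
  its minimiser.\<close>

lemma chernoff_exponent_le:
  fixes b L K u T :: real
  assumes "0 < T" "0 < u" "0 < L" "0 \<le> b"
    and "T * K \<le> (1 - 2 * b) * L" and "T * u\<^sup>2 \<le> 18 * L"
  defines "lam \<equiv> 4 * b * L / (T * u\<^sup>2)"
  shows "- lam * ((1 - b) * L) + T * (lam * K + (lam * u)\<^sup>2 / 8) \<le> - (b\<^sup>2 * L / 9)"
proof -
  have lam: "0 \<le> lam"
    using assms by (simp add: lam_def)
  have "T * (lam * K) \<le> lam * ((1 - 2 * b) * L)"
    using mult_left_mono[OF assms(5) lam] by (simp add: algebra_simps)
  moreover have "T * ((lam * u)\<^sup>2 / 8) = lam * (b * L / 2)"
    using assms by (simp add: lam_def field_simps power2_eq_square)
  ultimately have "- lam * ((1 - b) * L) + T * (lam * K + (lam * u)\<^sup>2 / 8) \<le> - (lam * (b * L / 2))"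
    by (simp add: algebra_simps)
  moreover have "lam * (b * L / 2) = 2 * b\<^sup>2 * L\<^sup>2 / (T * u\<^sup>2)"
    by (simp add: lam_def field_simps power2_eq_square)
  moreover have "2 * b\<^sup>2 * L\<^sup>2 / (18 * L) \<le> 2 * b\<^sup>2 * L\<^sup>2 / (T * u\<^sup>2)"
    using assms by (intro divide_left_mono) simp_all
  moreover have "2 * b\<^sup>2 * L\<^sup>2 / (18 * L) = b\<^sup>2 * L / 9"
    using assms by (simp add: field_simps power2_eq_square)
  ultimately show ?thesis by linarith
qed

lemma exp_neg_le_quarter:
  fixes b L :: real
  assumes "0 < b" "b < 1" "9 * ln (4 / b) / b\<^sup>2 \<le> L"
  shows "exp (- (b * L)) \<le> b / 4" and "exp (- (b\<^sup>2 * L / 9)) \<le> b / 4"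
proof -
  have ln_pos: "0 < ln (4 / b)"
    using assms by simp
  have quarter: "exp (- ln (4 / b)) = b / 4"
    using assms by (simp add: exp_minus)
  have second: "ln (4 / b) \<le> b\<^sup>2 * L / 9"
    using assms by (simp add: field_simps)
  then show "exp (- (b\<^sup>2 * L / 9)) \<le> b / 4"
    by (simp flip: quarter)
  have "0 \<le> 9 * ln (4 / b) / b\<^sup>2"
    using ln_pos by simp
  then have "0 \<le> L"
    using assms(3) by linarith
  then have "b\<^sup>2 * L \<le> b * L"
    using assms by (intro mult_right_mono) (simp_all add: power2_eq_square)
  with second ln_pos have "ln (4 / b) \<le> b * L"
    by linarith
  then show "exp (- (b * L)) \<le> b / 4"
    by (simp flip: quarter)
qed

definition eliminated_tables :: "elim_rule \<Rightarrow> nat \<Rightarrow> nat \<Rightarrow> nat \<Rightarrow> (nat \<times> nat \<Rightarrow> real) set" where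
  "eliminated_tables R n T a = {\<tau> \<in> tables n T. a \<notin> fst (elim_state R n (curry \<tau>) T)}"

definition fully_pulled_tables :: "elim_rule \<Rightarrow> nat \<Rightarrow> nat \<Rightarrow> nat \<Rightarrow> (nat \<times> nat \<Rightarrow> real) set" where
  "fully_pulled_tables R n T a = {\<tau> \<in> tables n T. snd (elim_state R n (curry \<tau>) T) a = T}"

lemma eliminated_weight_le:
  fixes p :: "nat \<Rightarrow> real"
  assumes p: "\<And>c. 0 \<le> p c \<and> p c \<le> 1" and "a < n"
    and gap: "\<And>c. c < n \<Longrightarrow> c \<noteq> a \<Longrightarrow> p c < p a - \<epsilon>"
    and success: "1 - \<delta> \<le> success_prob R n (\<lambda>c. bernoulli_arm (p c)) \<epsilon>"
  shows "(\<Sum>\<tau>\<in>eliminated_tables R n T a. table_weight n T p \<tau>) \<le> \<delta>"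
proof -
  define nu where "nu = (\<lambda>c. bernoulli_arm (p c))"
  define M where "M = sample_space n nu"
  define Succ where "Succ = {\<omega> \<in> space M. elim_success R n nu \<epsilon> \<omega>}"
  define Elim where "Elim = {\<omega> \<in> space M. table_of n T \<omega> \<in> eliminated_tables R n T a}"
  interpret prob_space M
    unfolding M_def nu_def by (intro prob_space_sample_space prob_space_bernoulli_arm)
  have sub: "eliminated_tables R n T a \<subseteq> tables n T"
    by (auto simp: eliminated_tables_def)
  have Elim_sets: "Elim \<in> sets M"
    unfolding Elim_def M_def nu_def by (rule sets_table_event[OF p sub])
  have unique: "c = a" if "eps_best n nu \<epsilon> c" for c
    using that gap \<open>a < n\<close> by (force simp: eps_best_def nu_def arm_mean_bernoulli_arms[OF p])
  have "\<not> elim_success R n nu \<epsilon> \<omega>" if "\<omega> \<in> Elim" for \<omega>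
  proof (rule not_elim_success_if_eliminated)
    show "a \<notin> fst (elim_state R n \<omega> T)"
      using that elim_state_table_of[of R n \<omega> T] by (simp add: Elim_def eliminated_tables_def)
  qed (rule unique)
  then have disj: "Elim \<inter> Succ = {}"
    by (auto simp: Succ_def)
  have "measure M Elim + measure M Succ \<le> 1"
  proof (cases "Succ \<in> sets M")
    case True
    then have "measure M Elim + measure M Succ = measure M (Elim \<union> Succ)"
      using Elim_sets disj by (simp add: finite_measure_Union)
    then show ?thesis by simp
  qed (simp add: measure_notin_sets) \<comment> \<open>a non-measurable success event has measure 0\<close>
  moreover have "success_prob R n nu \<epsilon> = measure M Succ"
    by (simp add: success_prob_def M_def Succ_def)
  ultimately have "measure M Elim \<le> \<delta>"
    using success by (simp add: nu_def)
  then show ?thesis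
    unfolding Elim_def M_def nu_def measure_table_event[OF p sub] .
qed

lemma negative_moment_term_le:
  fixes b \<epsilon> L :: real
  assumes b: "0 < b" "b < 1/8" and \<epsilon>: "0 < \<epsilon>" "\<epsilon> < b / 4" and L: "2 / b \<le> L" and "a < n"
  defines "\<gamma> \<equiv> \<epsilon> * (1 + b)"
  defines "T \<equiv> horizon b L \<gamma>"
  defines "lam \<equiv> 4 * b * L / (real T * (log_ratio_range \<gamma>)\<^sup>2)"
  shows "0 < lam"
    and "exp ((1 - b) * L) powr (- lam) *
      (\<Sum>\<tau>\<in>tables n T. table_weight n T (\<lambda>_. 1/2) \<tau> * likelihood_ratio n T a \<gamma> \<tau> powr (- lam))
      \<le> exp (- (b\<^sup>2 * L / 9))"
proof -
  have \<gamma>: "0 < \<gamma>" "\<gamma> \<le> 1/4"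
    using raised_bias_bounds[OF b \<epsilon>] \<epsilon> unfolding \<gamma>_def by linarith+
  have L_pos: "0 < L"
    using b L by (meson divide_pos_pos order_less_le_trans zero_less_numeral)
  have T_pos: "0 < real T"
    using horizon_pos[OF b \<epsilon> L] by (simp add: T_def \<gamma>_def)
  have u_pos: "0 < log_ratio_range \<gamma>"
    using \<gamma> by (rule log_ratio_range_pos)
  then show lam_pos: "0 < lam"
    using b L_pos T_pos by (simp add: lam_def)
  have "exp ((1 - b) * L) powr (- lam) *
      (\<Sum>\<tau>\<in>tables n T. table_weight n T (\<lambda>_. 1/2) \<tau> * likelihood_ratio n T a \<gamma> \<tau> powr (- lam))
      \<le> exp (- lam * ((1 - b) * L)) * exp (real T * (lam * kl_half \<gamma> + (lam * log_ratio_range \<gamma>)\<^sup>2 / 8))"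
    using sum_likelihood_ratio_powr_le[OF \<open>a < n\<close> \<gamma>(1) _ less_imp_le[OF lam_pos]] \<gamma>(2)
    by (simp add: powr_def)
  also have "\<dots> = exp (- lam * ((1 - b) * L) + real T * (lam * kl_half \<gamma> + (lam * log_ratio_range \<gamma>)\<^sup>2 / 8))"
    by (simp flip: exp_add)
  also have "\<dots> \<le> exp (- (b\<^sup>2 * L / 9))"
    unfolding exp_le_cancel_iff lam_def
    using T_pos u_pos L_pos b horizon_kl_half_le[of b \<gamma> L] horizon_log_ratio_range_le[of b \<gamma> L] \<gamma>
    by (intro chernoff_exponent_le) (simp_all add: T_def)
  finally show "exp ((1 - b) * L) powr (- lam) *
      (\<Sum>\<tau>\<in>tables n T. table_weight n T (\<lambda>_. 1/2) \<tau> * likelihood_ratio n T a \<gamma> \<tau> powr (- lam))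
      \<le> exp (- (b\<^sup>2 * L / 9))" .
qed

lemma fair_eliminated_weight_le:
  fixes b \<epsilon> L :: real
  assumes b: "0 < b" "b < 1/8" and \<epsilon>: "0 < \<epsilon>" "\<epsilon> < b / 4"
    and L: "2 / b \<le> L" "9 * ln (4 / b) / b\<^sup>2 \<le> L" and "a < n"
    and success: "1 - exp (- L) \<le> success_prob R n (\<lambda>c. bernoulli_arm (raised_means a (\<epsilon> * (1 + b)) c)) \<epsilon>"
  defines "T \<equiv> horizon b L (\<epsilon> * (1 + b))"
  shows "(\<Sum>\<tau>\<in>eliminated_tables R n T a. table_weight n T (\<lambda>_. 1/2) \<tau>) \<le> b / 2"
proof -
  define \<gamma> where "\<gamma> = \<epsilon> * (1 + b)"
  define w where "w = table_weight n T (\<lambda>_. 1/2)"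
  define r where "r = likelihood_ratio n T a \<gamma>"
  define lam where "lam = 4 * b * L / (real T * (log_ratio_range \<gamma>)\<^sup>2)"
  define c where "c = exp ((1 - b) * L)"
  note moment = negative_moment_term_le[OF b \<epsilon> L(1) \<open>a < n\<close>, folded T_def, folded \<gamma>_def, folded lam_def]
  have \<gamma>: "\<epsilon> < \<gamma>" "\<gamma> < 1/2"
    using raised_bias_bounds[OF b \<epsilon>] unfolding \<gamma>_def by linarith+
  have change: "(\<Sum>\<tau>\<in>eliminated_tables R n T a. w \<tau>)
      \<le> c * (\<Sum>\<tau>\<in>eliminated_tables R n T a. w \<tau> * r \<tau>) + c powr (- lam) * (\<Sum>\<tau>\<in>tables n T. w \<tau> * r \<tau> powr (- lam))"
    using \<gamma> \<epsilon> moment(1)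
    by (intro sum_le_change_of_measure)
      (auto simp: c_def w_def r_def eliminated_tables_def table_weight_half likelihood_ratio_pos)
  have "(\<Sum>\<tau>\<in>eliminated_tables R n T a. table_weight n T (raised_means a \<gamma>) \<tau>) \<le> exp (- L)"
    using \<gamma> \<epsilon> \<open>a < n\<close> success
    by (intro eliminated_weight_le raised_means_range) (auto simp: raised_means_def \<gamma>_def)
  then have "c * (\<Sum>\<tau>\<in>eliminated_tables R n T a. w \<tau> * r \<tau>) \<le> c * exp (- L)"
    by (intro mult_left_mono) (simp_all add: c_def w_def r_def table_weight_raised_means)
  also have "c * exp (- L) = exp (- (b * L))"
    by (simp add: c_def algebra_simps flip: exp_add)
  finally have "c * (\<Sum>\<tau>\<in>eliminated_tables R n T a. w \<tau> * r \<tau>) \<le> exp (- (b * L))" .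
  moreover have "b < 1"
    using b by simp
  note quarter = exp_neg_le_quarter[OF b(1) this L(2)]
  ultimately show ?thesis
    using change moment(2) quarter unfolding w_def r_def c_def by linarith
qed

lemma card_tables_le_pulled_eliminated:
  "n * card (tables n T) \<le>
    (\<Sum>a<n. card (fully_pulled_tables R n T a)) + (\<Sum>a<n. card (eliminated_tables R n T a)) + card (tables n T)"
proof -
  define H where "H a = {\<tau> \<in> tables n T. fst (elim_state R n (curry \<tau>) T) = {a}}" for a
  have "card (tables n T) \<le> card (fully_pulled_tables R n T a) + card (eliminated_tables R n T a) + card (H a)" for a
  proof -
    have "tables n T \<subseteq> fully_pulled_tables R n T a \<union> eliminated_tables R n T a \<union> H a"
    proof
      fix \<tau> assume "\<tau> \<in> tables n T"
      then show "\<tau> \<in> fully_pulled_tables R n T a \<union> eliminated_tables R n T a \<union> H a"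
        using elim_state_survivor_cases[of a R n "curry \<tau>" T]
        by (auto simp: fully_pulled_tables_def eliminated_tables_def H_def)
    qed
    then have "card (tables n T) \<le> card (fully_pulled_tables R n T a \<union> eliminated_tables R n T a \<union> H a)"
      by (rule card_mono[rotated]) (simp add: fully_pulled_tables_def eliminated_tables_def H_def)
    also have "\<dots> \<le> card (fully_pulled_tables R n T a) + card (eliminated_tables R n T a) + card (H a)"
      by (meson card_Un_le add_right_mono order_trans)
    finally show ?thesis .
  qed
  then have "n * card (tables n T) \<le>
      (\<Sum>a<n. card (fully_pulled_tables R n T a) + card (eliminated_tables R n T a) + card (H a))"
    using sum_mono[of "{..<n}" "\<lambda>_. card (tables n T)"] by simp
  moreover have "(\<Sum>a<n. card (H a)) \<le> card (tables n T)"
  proof -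
    have "(\<Sum>a<n. card (H a)) = card (\<Union>a<n. H a)"
      by (rule card_UN_disjoint[symmetric]) (auto simp: H_def)
    also have "\<dots> \<le> card (tables n T)"
      by (rule card_mono) (auto simp: H_def)
    finally show ?thesis .
  qed
  ultimately show ?thesis
    by (simp add: sum.distrib)
qed

lemma fair_weight_pulled_or_eliminated:
  "real n \<le> (\<Sum>a<n. \<Sum>\<tau>\<in>fully_pulled_tables R n T a. table_weight n T (\<lambda>_. 1/2) \<tau>)
     + (\<Sum>a<n. \<Sum>\<tau>\<in>eliminated_tables R n T a. table_weight n T (\<lambda>_. 1/2) \<tau>) + 1"
proof -
  define w0 where "w0 = (1/2 :: real) ^ card (grid n T)"
  have total: "w0 * card (tables n T) = 1"
    by (simp add: w0_def card_tables power_one_over flip: power_mult_distrib)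
  have "real (n * card (tables n T)) \<le> real ((\<Sum>a<n. card (fully_pulled_tables R n T a))
      + (\<Sum>a<n. card (eliminated_tables R n T a)) + card (tables n T))"
    using card_tables_le_pulled_eliminated[of n T R] by (simp only: of_nat_le_iff)
  then have "real n * real (card (tables n T)) \<le> (\<Sum>a<n. real (card (fully_pulled_tables R n T a)))
      + (\<Sum>a<n. real (card (eliminated_tables R n T a))) + real (card (tables n T))"
    by (simp only: of_nat_mult of_nat_add of_nat_sum)
  then have "w0 * (real n * real (card (tables n T))) \<le> w0 * ((\<Sum>a<n. real (card (fully_pulled_tables R n T a)))
      + (\<Sum>a<n. real (card (eliminated_tables R n T a))) + real (card (tables n T)))"
    by (rule mult_left_mono) (simp add: w0_def)
  then show ?thesis
    using total by (simp add: table_weight_half w0_def sum_distrib_left algebra_simps)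
qed

lemma expected_queries_ge:
  assumes p: "\<And>a. 0 \<le> p a \<and> p a \<le> 1"
  shows "ennreal (real T * (\<Sum>a<n. \<Sum>\<tau>\<in>fully_pulled_tables R n T a. table_weight n T p \<tau>))
    \<le> expected_queries R n (\<lambda>a. bernoulli_arm (p a))"
proof -
  define M where "M = sample_space n (\<lambda>a. bernoulli_arm (p a))"
  define F where "F a = {\<omega> \<in> space M. table_of n T \<omega> \<in> fully_pulled_tables R n T a}" for a
  have sub: "fully_pulled_tables R n T a \<subseteq> tables n T" for a
    by (auto simp: fully_pulled_tables_def)
  have F_sets: "F a \<in> sets M" for a
    unfolding F_def M_def by (rule sets_table_event[OF p sub])
  have weight_nonneg: "0 \<le> (\<Sum>\<tau>\<in>fully_pulled_tables R n T a. table_weight n T p \<tau>)" for a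
    by (intro sum_nonneg table_weight_nonneg p)
  have "(\<Sum>a<n. ennreal (real T) * indicator (F a) \<omega>) \<le> num_queries R n \<omega>" for \<omega>
  proof -
    have "ennreal (real T) * indicator (F a) \<omega> \<le> of_nat (snd (elim_state R n \<omega> T) a)" for a
    proof (cases "\<omega> \<in> F a")
      case True
      then have "snd (elim_state R n \<omega> T) a = T"
        using elim_state_table_of[of R n \<omega> T] by (simp add: F_def fully_pulled_tables_def)
      then show ?thesis
        using True by (simp add: ennreal_of_nat_eq_real_of_nat)
    qed simp
    then have "(\<Sum>a<n. ennreal (real T) * indicator (F a) \<omega>) \<le> of_nat (\<Sum>a<n. snd (elim_state R n \<omega> T) a)"
      unfolding of_nat_sum by (rule sum_mono)
    also have "\<dots> \<le> num_queries R n \<omega>"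
      by (rule total_pulls_le_num_queries)
    finally show ?thesis .
  qed
  then have "(\<integral>\<^sup>+\<omega>. (\<Sum>a<n. ennreal (real T) * indicator (F a) \<omega>) \<partial>M) \<le> expected_queries R n (\<lambda>a. bernoulli_arm (p a))"
    unfolding expected_queries_def M_def by (rule nn_integral_mono)
  moreover have "(\<integral>\<^sup>+\<omega>. (\<Sum>a<n. ennreal (real T) * indicator (F a) \<omega>) \<partial>M)
      = (\<Sum>a<n. \<integral>\<^sup>+\<omega>. ennreal (real T) * indicator (F a) \<omega> \<partial>M)"
    using F_sets by (intro nn_integral_sum) simp
  moreover have "\<dots> = (\<Sum>a<n. ennreal (real T) * emeasure M (F a))"
    using F_sets by (intro sum.cong refl nn_integral_cmult_indicator)
  moreover have "\<dots> = (\<Sum>a<n. ennreal (real T * (\<Sum>\<tau>\<in>fully_pulled_tables R n T a. table_weight n T p \<tau>)))"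
    unfolding F_def M_def emeasure_table_event[OF p sub] using weight_nonneg by (simp add: ennreal_mult)
  moreover have "\<dots> = ennreal (\<Sum>a<n. real T * (\<Sum>\<tau>\<in>fully_pulled_tables R n T a. table_weight n T p \<tau>))"
    using weight_nonneg by (intro sum_ennreal) simp
  moreover have "\<dots> = ennreal (real T * (\<Sum>a<n. \<Sum>\<tau>\<in>fully_pulled_tables R n T a. table_weight n T p \<tau>))"
    by (simp only: sum_distrib_left)
  ultimately show ?thesis
    by simp
qed

lemma fair_fully_pulled_weight_ge:
  fixes b \<epsilon> L :: real
  assumes b: "0 < b" "b < 1/8" and \<epsilon>: "0 < \<epsilon>" "\<epsilon> < b / 4"
    and L: "2 / b \<le> L" "9 * ln (4 / b) / b\<^sup>2 \<le> L" and n: "2 / b \<le> real n"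
    and correct: "\<forall>nu. valid_instance n nu \<longrightarrow> 1 - exp (- L) \<le> success_prob R n nu \<epsilon>"
  defines "T \<equiv> horizon b L (\<epsilon> * (1 + b))"
  shows "real n * (1 - b) \<le> (\<Sum>a<n. \<Sum>\<tau>\<in>fully_pulled_tables R n T a. table_weight n T (\<lambda>_. 1/2) \<tau>)"
proof -
  have "(\<Sum>\<tau>\<in>eliminated_tables R n T a. table_weight n T (\<lambda>_. 1/2) \<tau>) \<le> b / 2" if "a < n" for a
  proof -
    have "1 - exp (- L) \<le> success_prob R n (\<lambda>c. bernoulli_arm (raised_means a (\<epsilon> * (1 + b)) c)) \<epsilon>"
      using correct raised_bias_bounds[OF b \<epsilon>] \<epsilon>
      by (simp add: valid_instance_bernoulli_arms raised_means_range)
    from fair_eliminated_weight_le[OF b \<epsilon> L that this] show ?thesis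
      by (simp add: T_def)
  qed
  then have "(\<Sum>a<n. \<Sum>\<tau>\<in>eliminated_tables R n T a. table_weight n T (\<lambda>_. 1/2) \<tau>) \<le> real n * (b / 2)"
    using sum_mono[of "{..<n}" _ "\<lambda>_. b / 2"] by simp
  moreover have "1 \<le> real n * (b / 2)"
    using n b by (simp add: field_simps)
  ultimately show ?thesis
    using fair_weight_pulled_or_eliminated[of n T R] by (simp add: algebra_simps)
qed

lemma expected_queries_fair_ge:
  fixes b \<epsilon> L :: real
  assumes b: "0 < b" "b < 1/8" and \<epsilon>: "0 < \<epsilon>" "\<epsilon> < b / 4"
    and L: "2 / b \<le> L" "9 * ln (4 / b) / b\<^sup>2 \<le> L" and n: "2 / b \<le> real n"
    and correct: "\<forall>nu. valid_instance n nu \<longrightarrow> 1 - exp (- L) \<le> success_prob R n nu \<epsilon>"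
  shows "ennreal ((1 - 8 * b) * real n * L / (2 * \<epsilon>\<^sup>2)) \<le> expected_queries R n (\<lambda>_. bernoulli_arm (1/2))"
proof -
  define T where "T = horizon b L (\<epsilon> * (1 + b))"
  let ?pulled = "\<Sum>a<n. \<Sum>\<tau>\<in>fully_pulled_tables R n T a. table_weight n T (\<lambda>_. 1/2) \<tau>"
  have L_pos: "0 < L"
    using b L(1) by (meson divide_pos_pos order_less_le_trans zero_less_numeral)
  have "(1 - 8 * b) * real n * L / (2 * \<epsilon>\<^sup>2) = (1 - 8 * b) * (real n * L / (2 * \<epsilon>\<^sup>2))"
    by simp
  also have "\<dots> \<le> ((1 - 6 * b) * (1 - b)) * (real n * L / (2 * \<epsilon>\<^sup>2))"
    using b L_pos by (intro mult_right_mono) (simp_all add: algebra_simps)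
  also have "\<dots> = ((1 - 6 * b) * L / (2 * \<epsilon>\<^sup>2)) * (real n * (1 - b))"
    by (simp add: field_simps)
  also have "\<dots> \<le> real T * ?pulled"
    using horizon_ge[OF b \<epsilon> L(1)] fair_fully_pulled_weight_ge[OF b \<epsilon> L n correct] b
    unfolding T_def by (intro mult_mono) simp_all
  finally have "ennreal ((1 - 8 * b) * real n * L / (2 * \<epsilon>\<^sup>2)) \<le> ennreal (real T * ?pulled)"
    by (rule ennreal_leI)
  also have "\<dots> \<le> expected_queries R n (\<lambda>_. bernoulli_arm (1/2))"
    using expected_queries_ge[of "\<lambda>_. 1/2" T n R] by simp
  finally show ?thesis .
qed

lemma expected_queries_fair_ge_ln_inverse:
  fixes b \<beta> \<epsilon> \<delta> :: real
  assumes b: "0 < b" "b < 1/8" "4 * b \<le> \<beta>" and \<epsilon>: "0 < \<epsilon>" "\<epsilon> < b / 4"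
    and \<delta>: "0 < \<delta>" "\<delta> < exp (- max (2 / b) (9 * ln (4 / b) / b\<^sup>2))"
    and n: "2 / b < real n"
    and correct: "\<forall>n\<ge>1. \<forall>nu. valid_instance n nu \<longrightarrow> success_prob R n nu \<epsilon> \<ge> 1 - \<delta>"
  shows "ennreal ((1/2 - \<beta>) * real n / \<epsilon>^2 * ln (1/\<delta>)) \<le> expected_queries R n (\<lambda>_. bernoulli_arm (1/2))"
proof -
  define L where "L = ln (1 / \<delta>)"
  have \<delta>_eq: "\<delta> = exp (- L)"
    using \<delta> by (simp add: L_def ln_div)
  have "ln \<delta> < ln (exp (- max (2 / b) (9 * ln (4 / b) / b\<^sup>2)))"
    using \<delta> by (subst ln_less_cancel_iff) simp_all
  then have L: "2 / b \<le> L" "9 * ln (4 / b) / b\<^sup>2 \<le> L"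
    using \<delta> by (simp_all add: L_def ln_div)
  have "0 < 2 / b"
    using b by simp
  with n have "1 \<le> n"
    by linarith
  with correct have "\<forall>nu. valid_instance n nu \<longrightarrow> 1 - exp (- L) \<le> success_prob R n nu \<epsilon>"
    by (simp add: \<delta>_eq)
  note bound = expected_queries_fair_ge[OF b(1,2) \<epsilon> L less_imp_le[OF n] this]
  have "0 \<le> real n * L / \<epsilon>\<^sup>2"
    using b L(1) by (simp add: order_trans[OF _ L(1)])
  then have "(1/2 - \<beta>) * (real n * L / \<epsilon>\<^sup>2) \<le> ((1 - 8 * b) / 2) * (real n * L / \<epsilon>\<^sup>2)"
    using b by (intro mult_right_mono) simp_all
  with bound show ?thesis
    unfolding L_def by (simp add: field_simps) (meson ennreal_leI order_trans)
qed

lemma expected_queries_lower_bound: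
  fixes b \<beta> \<epsilon> \<delta> :: real
  assumes b: "0 < b" "b < 1/8" "4 * b \<le> \<beta>" and \<epsilon>: "0 < \<epsilon>" "\<epsilon> < b / 4"
    and \<delta>: "0 < \<delta>" "\<delta> < exp (- max (2 / b) (9 * ln (4 / b) / b\<^sup>2))"
    and correct: "\<forall>n\<ge>1. \<forall>nu. valid_instance n nu \<longrightarrow> success_prob R n nu \<epsilon> \<ge> 1 - \<delta>"
  shows "\<exists>n0. \<forall>n>n0. \<exists>nu. valid_instance n nu \<and>
    ennreal ((1/2 - \<beta>) * real n / \<epsilon>^2 * ln (1/\<delta>)) \<le> expected_queries R n nu"
proof (intro exI[of _ "nat \<lceil>2 / b\<rceil>"] allI impI exI conjI)
  fix n assume "nat \<lceil>2 / b\<rceil> < n"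
  then have "2 / b < real n"
    by linarith
  then show "ennreal ((1/2 - \<beta>) * real n / \<epsilon>^2 * ln (1/\<delta>)) \<le> expected_queries R n (\<lambda>_. bernoulli_arm (1/2))"
    by (rule expected_queries_fair_ge_ln_inverse[OF b \<epsilon> \<delta> _ correct])
  show "valid_instance n (\<lambda>_. bernoulli_arm (1/2))"
    using valid_instance_bernoulli_arms[of "\<lambda>_. 1/2"] by simp
qed

theorem theorem4:
  fixes \<beta> :: real
  assumes "\<beta> > 0"
  shows "\<exists>\<epsilon>0>0. \<exists>\<delta>0>0. \<forall>(R::elim_rule) (\<epsilon>::real) (\<delta>::real).
           0 < \<epsilon> \<longrightarrow> \<epsilon> < \<epsilon>0 \<longrightarrow> 0 < \<delta> \<longrightarrow> \<delta> < \<delta>0 \<longrightarrow>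
           (\<forall>n\<ge>1. \<forall>nu. valid_instance n nu \<longrightarrow> success_prob R n nu \<epsilon> \<ge> 1 - \<delta>) \<longrightarrow>
           (\<exists>n0. \<forall>n>n0. \<exists>nu. valid_instance n nu \<and>
              ennreal ((1/2 - \<beta>) * real n / \<epsilon>^2 * ln (1/\<delta>)) \<le> expected_queries R n nu)"
proof -
  define b where "b = min \<beta> (1/4) / 4"
  have b: "0 < b" "b < 1/8" "4 * b \<le> \<beta>"
    using assms by (auto simp: b_def)
  then have "0 < b / 4"
    by simp
  with expected_queries_lower_bound[OF b] show ?thesis
    by (intro exI[of _ "b / 4"] conjI[rotated] exI[of _ "exp (- max (2 / b) (9 * ln (4 / b) / b\<^sup>2))"]
        conjI[rotated] allI impI) simp_all
qed

end
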